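(* Let $Z$ be an $n\times k$ matrix and $\varepsilon\in\mathbb R^n$ such that $Z'D_\varepsilon^2Z$ is invertible, and set $V=Z(Z'D_\varepsilon^2Z)^{-1}Z'$ and $P=D_\varepsilon VD_\varepsilon$. Then for every $i=1,\dots,n$, $$V_{ii}-3V_{ii}P_{ii}+4V_{ii}P_{ii}^2-2\sum_{j=1}^nV_{ij}^2\varepsilon_j^2P_{ij}^2\;\ge\;V_{ii}(1-P_{ii})(1-2P_{ii})^2.$$
   Context: $D_\varepsilon$ is the diagonal matrix with diagonal $\varepsilon$ and $D_\varepsilon^2=D_\varepsilon D_\varepsilon$; $V_{ij}$ and $P_{ij}$ denote entries of $V$ and $P$. *)

theory Defs
  imports "HOL-Analysis.Analysis"
begin

definition diag_mat :: "real ^ 'n \<Rightarrow> real ^ 'n ^ 'n" where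
  "diag_mat e = (\<chi> i j. if i = j then e $ i else 0)"

end

theory Submission
  imports Defs
begin

text \<open>With \<open>W = D\<^sub>\<epsilon>\<^sup>2\<close>, \<open>V W V = V\<close>, so \<open>P = D\<^sub>\<epsilon> V D\<^sub>\<epsilon>\<close> is a symmetric idempotent and
  \<open>p = P\<^sub>i\<^sub>i = \<Sum>\<^sub>j P\<^sub>i\<^sub>j\<^sup>2\<close>. Multiplying by \<open>\<epsilon>\<^sub>i\<^sup>2\<close> turns \<open>V\<^sub>i\<^sub>i\<close> into \<open>p\<close> and each summand into \<open>P\<^sub>i\<^sub>j\<^sup>4\<close>,
  so the claim becomes \<open>\<Sum>\<^sub>j P\<^sub>i\<^sub>j\<^sup>4 \<le> p\<^sup>4 + (p - p\<^sup>2)\<^sup>2\<close>, which holds because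
  \<open>\<Sum>\<^sub>j\<^sub>\<noteq>\<^sub>i P\<^sub>i\<^sub>j\<^sup>4 \<le> (\<Sum>\<^sub>j\<^sub>\<noteq>\<^sub>i P\<^sub>i\<^sub>j\<^sup>2)\<^sup>2 = (p - p\<^sup>2)\<^sup>2\<close>.\<close>

lemma matrix_inv_right:
  assumes "invertible A"
  shows "A ** matrix_inv A = mat 1"
  using assms unfolding invertible_def matrix_inv_def by (metis (mono_tags, lifting) someI_ex)

lemma matrix_inv_left:
  assumes "invertible A"
  shows "matrix_inv A ** A = mat 1"
  using assms unfolding invertible_def matrix_inv_def by (metis (mono_tags, lifting) someI_ex)

lemma transpose_matrix_inv_symmetric:
  fixes A :: "'a::comm_semiring_1 ^ 'n ^ 'n"
  assumes "invertible A" and "transpose A = A"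
  shows "transpose (matrix_inv A) = matrix_inv A"
proof -
  have left_inv: "transpose (matrix_inv A) ** A = mat 1"
    using matrix_inv_right[OF assms(1)] assms(2) by (metis matrix_transpose_mul transpose_mat)
  have "transpose (matrix_inv A) = transpose (matrix_inv A) ** (A ** matrix_inv A)"
    by (simp add: matrix_inv_right[OF assms(1)])
  also have "\<dots> = matrix_inv A"
    by (metis matrix_mul_assoc left_inv matrix_mul_lid)
  finally show ?thesis .
qed

lemma diag_mat_mult_nth: "(diag_mat e ** A) $ i $ j = e $ i * A $ i $ j"
  by (simp add: matrix_matrix_mult_def diag_mat_def if_distrib[of "\<lambda>x. x * _"] cong: if_cong)

lemma mult_diag_mat_nth: "(A ** diag_mat e) $ i $ j = A $ i $ j * e $ j"
  by (simp add: matrix_matrix_mult_def diag_mat_def if_distrib[of "\<lambda>x. _ * x"] cong: if_cong)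

lemma transpose_diag_mat [simp]: "transpose (diag_mat e) = diag_mat e"
  by (simp add: transpose_def diag_mat_def vec_eq_iff)

lemma weighted_projection:
  fixes Z :: "real ^ 'k ^ 'n" and W :: "real ^ 'n ^ 'n"
  assumes inv: "invertible (transpose Z ** W ** Z)" and W_sym: "transpose W = W"
  defines "V \<equiv> Z ** matrix_inv (transpose Z ** W ** Z) ** transpose Z"
  shows "transpose V = V" and "V ** W ** V = V"
proof -
  let ?M = "transpose Z ** W ** Z"
  have "transpose ?M = ?M"
    using W_sym by (simp add: matrix_transpose_mul matrix_mul_assoc)
  then have N_sym: "transpose (matrix_inv ?M) = matrix_inv ?M"
    using inv by (rule transpose_matrix_inv_symmetric[rotated])
  show "transpose V = V"
    unfolding V_def by (simp add: matrix_transpose_mul N_sym matrix_mul_assoc)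
  have "V ** W ** V = Z ** (matrix_inv ?M ** ?M) ** matrix_inv ?M ** transpose Z"
    unfolding V_def by (simp add: matrix_mul_assoc)
  then show "V ** W ** V = V"
    by (simp add: matrix_inv_left[OF inv] V_def)
qed

lemma symmetric_idempotent_diag_eq_sum_squares:
  fixes A :: "real ^ 'n ^ 'n"
  assumes "transpose A = A" and "A ** A = A"
  shows "A $ i $ i = (\<Sum>j\<in>UNIV. (A $ i $ j)\<^sup>2)"
proof -
  have sym: "A $ j $ i = A $ i $ j" for j
    using assms(1) by (metis transpose_def vec_lambda_beta)
  have "A $ i $ i = (A ** A) $ i $ i"
    using assms(2) by simp
  also have "\<dots> = (\<Sum>j\<in>UNIV. A $ i $ j * A $ j $ i)"
    by (simp add: matrix_matrix_mult_def)
  also have "\<dots> = (\<Sum>j\<in>UNIV. (A $ i $ j)\<^sup>2)"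
    by (simp only: sym power2_eq_square)
  finally show ?thesis .
qed

lemma sum_squares_le_square_sum:
  fixes f :: "'a \<Rightarrow> real"
  assumes "finite A" and "\<And>a. a \<in> A \<Longrightarrow> f a \<ge> 0"
  shows "(\<Sum>a\<in>A. (f a)\<^sup>2) \<le> (\<Sum>a\<in>A. f a)\<^sup>2"
proof -
  have "(\<Sum>a\<in>A. (f a)\<^sup>2) \<le> (\<Sum>a\<in>A. f a * sum f A)"
  proof (rule sum_mono)
    fix a assume "a \<in> A"
    then have "f a \<le> sum f A"
      using assms by (intro member_le_sum) auto
    then show "(f a)\<^sup>2 \<le> f a * sum f A"
      using assms \<open>a \<in> A\<close> by (simp add: power2_eq_square mult_left_mono)
  qed
  also have "\<dots> = (\<Sum>a\<in>A. f a)\<^sup>2"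
    by (simp add: sum_distrib_right power2_eq_square)
  finally show ?thesis .
qed

lemma sum_power4_le_of_diag_eq_sum_squares:
  fixes x :: "'n::finite \<Rightarrow> real"
  assumes diag: "x i = (\<Sum>j\<in>UNIV. (x j)\<^sup>2)"
  shows "(\<Sum>j\<in>UNIV. (x j)^4) \<le> (x i)\<^sup>2 * (1 - 2 * x i + 2 * (x i)\<^sup>2)"
proof -
  let ?p = "x i"
  have off_diag: "(\<Sum>j\<in>UNIV - {i}. (x j)\<^sup>2) = ?p - ?p\<^sup>2"
    using diag sum.remove[of UNIV i "\<lambda>j. (x j)\<^sup>2"] by simp
  have "(\<Sum>j\<in>UNIV - {i}. ((x j)\<^sup>2)\<^sup>2) \<le> (?p - ?p\<^sup>2)\<^sup>2"
    using sum_squares_le_square_sum[of "UNIV - {i}" "\<lambda>j. (x j)\<^sup>2"] off_diag by simp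
  moreover have "(\<Sum>j\<in>UNIV. (x j)^4) = ?p^4 + (\<Sum>j\<in>UNIV - {i}. ((x j)\<^sup>2)\<^sup>2)"
    using sum.remove[of UNIV i "\<lambda>j. (x j)^4"] by simp
  ultimately show ?thesis
    by (simp add: algebra_simps power2_eq_square power4_eq_xxxx)
qed

lemma diag_weighted_projection:
  fixes Z :: "real ^ 'k ^ 'n" and \<epsilon> :: "real ^ 'n"
  assumes inv: "invertible (transpose Z ** (diag_mat \<epsilon> ** diag_mat \<epsilon>) ** Z)"
  defines "V \<equiv> Z ** matrix_inv (transpose Z ** (diag_mat \<epsilon> ** diag_mat \<epsilon>) ** Z) ** transpose Z"
  defines "P \<equiv> diag_mat \<epsilon> ** V ** diag_mat \<epsilon>"
  shows "transpose P = P" and "P ** P = P"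
proof -
  let ?D = "diag_mat \<epsilon>"
  have W_sym: "transpose (?D ** ?D) = ?D ** ?D"
    by (simp add: matrix_transpose_mul)
  have V_sym: "transpose V = V" and VWV: "V ** (?D ** ?D) ** V = V"
    using weighted_projection[OF inv W_sym] by (simp_all add: V_def)
  show "transpose P = P"
    by (simp add: P_def V_sym matrix_transpose_mul matrix_mul_assoc)
  have "P ** P = ?D ** (V ** (?D ** ?D) ** V) ** ?D"
    by (simp add: P_def matrix_mul_assoc)
  then show "P ** P = P"
    by (simp add: VWV P_def)
qed

lemma unscaled_sum_power4_bound:
  fixes v e :: "'n::finite \<Rightarrow> real" and i :: 'n
  defines "q \<equiv> \<lambda>j. e i * v j * e j"
  assumes bound: "(\<Sum>j\<in>UNIV. (q j)^4) \<le> (q i)\<^sup>2 * (1 - 2 * q i + 2 * (q i)\<^sup>2)"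
  shows "(\<Sum>j\<in>UNIV. (v j)\<^sup>2 * (e j)\<^sup>2 * (q j)\<^sup>2) \<le> v i * q i * (1 - 2 * q i + 2 * (q i)\<^sup>2)"
proof -
  define B where "B = v i * q i * (1 - 2 * q i + 2 * (q i)\<^sup>2)
                      - (\<Sum>j\<in>UNIV. (v j)\<^sup>2 * (e j)\<^sup>2 * (q j)\<^sup>2)"
  have v_diag: "(e i)\<^sup>2 * v i = q i"
    by (simp add: q_def power2_eq_square)
  have summand: "(e i)\<^sup>2 * ((v j)\<^sup>2 * (e j)\<^sup>2 * (q j)\<^sup>2) = (q j)^4" for j
    by (simp add: q_def power2_eq_square power4_eq_xxxx ac_simps)
  have "(e i)\<^sup>2 * B = ((e i)\<^sup>2 * v i) * q i * (1 - 2 * q i + 2 * (q i)\<^sup>2)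
      - (\<Sum>j\<in>UNIV. (e i)\<^sup>2 * ((v j)\<^sup>2 * (e j)\<^sup>2 * (q j)\<^sup>2))"
    unfolding B_def by (simp only: right_diff_distrib sum_distrib_left mult.assoc)
  also have "\<dots> = (q i)\<^sup>2 * (1 - 2 * q i + 2 * (q i)\<^sup>2) - (\<Sum>j\<in>UNIV. (q j)^4)"
    unfolding v_diag summand by (simp add: power2_eq_square)
  finally have scaled: "(e i)\<^sup>2 * B \<ge> 0"
    using bound by simp
  have "B \<ge> 0"
  proof (cases "e i = 0")
    case True
    then show ?thesis by (simp add: B_def q_def)
  next
    case False
    then show ?thesis using scaled by (simp add: zero_le_mult_iff)
  qed
  then show ?thesis by (simp add: B_def)
qed

theorem mainTheorem11:
  fixes Z :: "real ^ 'k ^ 'n" and \<epsilon> :: "real ^ 'n"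
    and V P :: "real ^ 'n ^ 'n"
  assumes inv: "invertible (transpose Z ** (diag_mat \<epsilon> ** diag_mat \<epsilon>) ** Z)"
    and V_def: "V = Z ** matrix_inv (transpose Z ** (diag_mat \<epsilon> ** diag_mat \<epsilon>) ** Z) ** transpose Z"
    and P_def: "P = diag_mat \<epsilon> ** V ** diag_mat \<epsilon>"
  shows "V $ i $ i - 3 * V $ i $ i * P $ i $ i + 4 * V $ i $ i * (P $ i $ i)^2
           - 2 * (\<Sum>j\<in>UNIV. (V $ i $ j)^2 * (\<epsilon> $ j)^2 * (P $ i $ j)^2)
         \<ge> V $ i $ i * (1 - P $ i $ i) * (1 - 2 * P $ i $ i)^2"
proof -
  let ?p = "P $ i $ i" and ?S = "\<Sum>j\<in>UNIV. (V $ i $ j)^2 * (\<epsilon> $ j)^2 * (P $ i $ j)^2"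
  have "transpose P = P" and "P ** P = P"
    using diag_weighted_projection[OF inv] by (simp_all add: V_def P_def)
  then have "(\<Sum>j\<in>UNIV. (P $ i $ j)^4) \<le> ?p\<^sup>2 * (1 - 2 * ?p + 2 * ?p\<^sup>2)"
    by (intro sum_power4_le_of_diag_eq_sum_squares symmetric_idempotent_diag_eq_sum_squares)
  moreover have "P $ i $ j = \<epsilon> $ i * V $ i $ j * \<epsilon> $ j" for j
    by (simp add: P_def diag_mat_mult_nth mult_diag_mat_nth)
  ultimately have "?S \<le> V $ i $ i * ?p * (1 - 2 * ?p + 2 * ?p\<^sup>2)"
    using unscaled_sum_power4_bound[where v = "\<lambda>j. V $ i $ j" and e = "\<lambda>j. \<epsilon> $ j"] by simp
  moreover have "V $ i $ i - 3 * V $ i $ i * ?p + 4 * V $ i $ i * ?p^2 - 2 * ?S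
      - V $ i $ i * (1 - ?p) * (1 - 2 * ?p)^2 = 2 * (V $ i $ i * ?p * (1 - 2 * ?p + 2 * ?p\<^sup>2) - ?S)"
    by (simp add: algebra_simps power2_eq_square)
  ultimately show ?thesis by argo
qed

end
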